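(* There exists a function $\lambda:(0,\infty)^2\to(0,\infty)$ such that for every non-constant $t\in\mathfrak{T}_1$ with $\Re t>0$ on $\mathbb{T}$ and each choice of sign, $$\|\Psi^{\pm}t\|_\infty\le\lambda(\rho(t),\tau(t))\,n(t)^{\pi/2}.$$
   Context: $\mathbb{T}=\mathbb{R}/\mathbb{Z}$, $e_j(x)=e^{2\pi i jx}$. $\mathfrak{T}_1$: trigonometric polynomials on $\mathbb{T}$; $n^+(t)=\max\mathrm{freq}(t)$, $n^-(t)=-\min\mathrm{freq}(t)$, $n(t)=\max\{n^+(t),n^-(t)\}$; $\|\widehat t\|_1=\sum_j|\widehat t(j)|$. For $\Re t>0$: $\rho(t)=\min\{1,\min\Re t/(2e\|\widehat t\|_1)\}$, $\tau(t)=\max\{\log(\|t\|_\infty+\min\Re t/2),\ \pi/2+|\log(\min\Re t/2)|\}$. For $t$ with $\Re t>0$, $Lt=\log t$ (principal logarithm), $A_\infty^{\pm}g=\tfrac12\widehat g(0)+\sum_{j\ge1}\widehat g(\pm j)e_{\pm j}$, and $\Psi^{\pm}t=\exp(A_\infty^{\pm}(Lt))$. *)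

theory Defs
  imports "HOL-Analysis.Analysis"
begin

text \<open>Trigonometric polynomials on T = R/Z are represented by their finitely supported
  coefficient functions c :: int => complex; the polynomial is the 1-periodic function
  x |-> sum_j c j * e_j x on the reals.\<close>

definition ee :: "int \<Rightarrow> real \<Rightarrow> complex" where
  "ee j x = exp (2 * pi * \<i> * of_int j * of_real x)"

definition supp :: "(int \<Rightarrow> complex) \<Rightarrow> int set" where
  "supp c = {j. c j \<noteq> 0}"

definition is_trig_poly :: "(int \<Rightarrow> complex) \<Rightarrow> bool" where
  "is_trig_poly c \<longleftrightarrow> finite (supp c)"

definition trig_eval :: "(int \<Rightarrow> complex) \<Rightarrow> real \<Rightarrow> complex" where
  "trig_eval c x = (\<Sum>j\<in>supp c. c j * ee j x)"

definition nonconstant :: "(int \<Rightarrow> complex) \<Rightarrow> bool" where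
  "nonconstant c \<longleftrightarrow> (\<exists>j. j \<noteq> 0 \<and> c j \<noteq> 0)"

definition n_plus :: "(int \<Rightarrow> complex) \<Rightarrow> int" where
  "n_plus c = Max (supp c)"

definition n_minus :: "(int \<Rightarrow> complex) \<Rightarrow> int" where
  "n_minus c = - Min (supp c)"

definition n_deg :: "(int \<Rightarrow> complex) \<Rightarrow> int" where
  "n_deg c = max (n_plus c) (n_minus c)"

definition coeff_l1 :: "(int \<Rightarrow> complex) \<Rightarrow> real" where
  "coeff_l1 c = (\<Sum>j\<in>supp c. norm (c j))"

text \<open>Sup norm over the torus (functions are 1-periodic, so [0,1] suffices).\<close>
definition sup_norm :: "(real \<Rightarrow> complex) \<Rightarrow> real" where
  "sup_norm f = (SUP x\<in>{0..1}. norm (f x))"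

definition min_re :: "(real \<Rightarrow> complex) \<Rightarrow> real" where
  "min_re f = (INF x\<in>{0..1}. Re (f x))"

definition rho :: "(int \<Rightarrow> complex) \<Rightarrow> real" where
  "rho c = min 1 (min_re (trig_eval c) / (2 * exp 1 * coeff_l1 c))"

definition tau :: "(int \<Rightarrow> complex) \<Rightarrow> real" where
  "tau c = max (ln (sup_norm (trig_eval c) + min_re (trig_eval c) / 2))
               (pi / 2 + \<bar>ln (min_re (trig_eval c) / 2)\<bar>)"

definition fcoeff :: "(real \<Rightarrow> complex) \<Rightarrow> int \<Rightarrow> complex" where
  "fcoeff g j = integral {0..1} (\<lambda>x. g x * ee (- j) x)"

text \<open>A_infinity^{+} (s = True) and A_infinity^{-} (s = False).\<close>
definition A_inf :: "bool \<Rightarrow> (real \<Rightarrow> complex) \<Rightarrow> real \<Rightarrow> complex" where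
  "A_inf s g x = fcoeff g 0 / 2 +
     (\<Sum>k. let j = (if s then 1 else -1) * int (Suc k) in fcoeff g j * ee j x)"

definition Psi :: "bool \<Rightarrow> (int \<Rightarrow> complex) \<Rightarrow> real \<Rightarrow> complex" where
  "Psi s c = (\<lambda>x. exp (A_inf s (\<lambda>y. Ln (trig_eval c y)) x))"

end

theory Submission
  imports Defs
begin

(* Write g = log t = ln |t| + i theta.  For 0 <= r < 1 the Abel mean of the one-sided
   Fourier series A^{+-} g equals the integral of g against the kernel
   K_r(x,y) = 1/2 + w/(1 - w), w = r e_{+-1}(x - y), whose real part is nonnegative with
   integral 1/2 and whose imaginary part satisfies |Im K_r(x,y)| |sin (pi (x - y))| <= 1/2.
   Hence the Abel mean A_r g satisfies
     Re A_r g (x) <= ln ||t||_inf / 2 + integral of |theta x - theta y| |Im K_r(x,y)| dy.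
   The argument theta takes values in (-pi/2, pi/2) and is Lipschitz with constant
   L = 2 pi n max(1, ||t^||_1 / min Re t); bounding |theta x - theta y| by pi far from the
   diagonal and by L |x - y| near it, Jordan's inequality turns the last integral into
   pi/2 + (pi/2) ln (L / pi).  Since log t is smooth, its Fourier coefficients are O(1/j^2),
   so the Abel means converge to A^{+-} g itself as r -> 1, and exponentiating gives
   |Psi t| <= sqrt ||t||_inf e^{pi/2} (L/pi)^{pi/2}, which is of the required form
   lambda(rho t, tau t) n^{pi/2}. *)

section \<open>Characters\<close>

lemma ee_cis: "ee j x = cis (2 * pi * of_int j * x)"
  by (simp add: ee_def cis_conv_exp mult_ac)

lemma ee_add: "ee j (x + y) = ee j x * ee j y"
  by (simp add: ee_def distrib_left distrib_right exp_add[symmetric] algebra_simps)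

lemma ee_0 [simp]: "ee j 0 = 1"
  by (simp add: ee_def)

lemma ee_int [simp]: "ee j (of_int k) = 1"
proof -
  have "ee j (of_int k) = cis (2 * pi * of_int (j * k))"
    by (simp add: ee_cis mult_ac)
  also have "\<dots> = 1"
    by (rule cis_multiple_2pi) simp
  finally show ?thesis .
qed

lemma ee_1 [simp]: "ee j 1 = 1"
  using ee_int[of j 1] by simp

lemma ee_period: "ee j (x + of_int k) = ee j x"
  by (simp add: ee_add)

text \<open>Every real is an integer translate of a point of [0,1]; functions of period 1 are
  therefore determined by their values there.\<close>

lemma periodic_representative: "\<exists>y\<in>{0..1}. \<exists>k. (x::real) = y + of_int k"
proof -
  have "x = frac x + of_int \<lfloor>x\<rfloor>"
    by (simp add: frac_def)
  moreover have "frac x \<in> {0..1}"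
    using frac_lt_1[of x] frac_ge_0[of x] by auto
  ultimately show ?thesis
    by blast
qed

lemma norm_ee [simp]: "norm (ee j x) = 1"
  by (simp add: ee_cis)

lemma ee_neg_mult: "ee (- j) y * ee j x = ee j (x - y)"
  by (simp add: ee_def exp_add[symmetric] algebra_simps)

lemma ee_mult_nat: "ee (s * int k) v = ee s v ^ k"
proof -
  have "ee (s * int k) v = exp (of_nat k * (2 * pi * \<i> * of_int s * of_real v))"
    by (simp add: ee_def mult_ac)
  also have "\<dots> = ee s v ^ k"
    by (simp add: exp_of_nat_mult ee_def)
  finally show ?thesis .
qed

lemma ee_deriv:
  "(ee j has_vector_derivative (2 * pi * \<i> * of_int j * ee j x)) (at x within S)"
proof -
  have "((\<lambda>z. exp (2 * pi * \<i> * of_int j * z)) has_field_derivative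
          (2 * pi * \<i> * of_int j * exp (2 * pi * \<i> * of_int j * of_real x))) (at (of_real x))"
    by (auto intro!: derivative_eq_intros)
  from has_vector_derivative_real_field[OF this] show ?thesis
    by (simp add: ee_def[abs_def])
qed

lemma continuous_on_ee [continuous_intros]:
  "continuous_on S f \<Longrightarrow> continuous_on S (\<lambda>y. ee j (f y))"
  unfolding ee_def by (intro continuous_intros)

section \<open>Jordan's inequality\<close>

text \<open>Concavity of sine on [0, pi/2] gives sin (pi a) >= 2 a for a in [0, 1/2].\<close>

lemma jordan_inequality:
  fixes a :: real
  assumes "0 \<le> a" "a \<le> 1/2"
  shows "2 * a \<le> sin (pi * a)"
proof -
  have cv: "convex_on {0..pi/2} (\<lambda>x. - sin x)"
    by (rule f''_ge0_imp_convex[where f'="\<lambda>x. - cos x" and f''="\<lambda>x. sin x"])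
       (auto intro!: derivative_eq_intros sin_ge_zero)
  have "- sin (pi * a) \<le> (- sin (pi/2) - - sin 0) / (pi/2 - 0) * (pi * a - 0) + - sin 0"
    using convex_onD_Icc'[OF cv, of "pi * a"] assms by simp
  then show ?thesis
    by (simp add: field_simps)
qed

lemma sin_circle_dist:
  fixes x y :: real
  assumes "x \<in> {0..1}" "y \<in> {0..1}"
  shows "2 * min \<bar>x - y\<bar> (1 - \<bar>x - y\<bar>) \<le> \<bar>sin (pi * (x - y))\<bar>"
proof -
  define a where "a = \<bar>x - y\<bar>"
  have a: "0 \<le> a" "a \<le> 1"
    using assms by (auto simp: a_def)
  have "\<bar>sin (pi * (x - y))\<bar> = \<bar>sin (pi * a)\<bar>"
  proof (cases "x \<le> y")
    case True
    then have "pi * (x - y) = - (pi * a)"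
      by (simp add: a_def right_diff_distrib)
    then show ?thesis
      by (simp only: sin_minus abs_minus_cancel)
  qed (simp add: a_def)
  also have "\<dots> = sin (pi * a)"
    using a by (intro abs_of_nonneg sin_ge_zero) auto
  finally have e: "\<bar>sin (pi * (x - y))\<bar> = sin (pi * a)" .
  show ?thesis
  proof (cases "a \<le> 1/2")
    case True
    then show ?thesis
      using jordan_inequality[of a] a by (simp add: e a_def[symmetric])
  next
    case False
    have "sin (pi * a) = sin (pi * (1 - a))"
      by (simp add: right_diff_distrib sin_diff)
    then show ?thesis
      using jordan_inequality[of "1 - a"] a False by (simp add: e a_def[symmetric])
  qed
qed

section \<open>Fourier coefficients\<close>

lemma integral_ee: "j \<noteq> 0 \<Longrightarrow> integral {0..1} (ee j) = 0"
proof -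
  assume j: "j \<noteq> 0"
  define a where "a = 2 * pi * \<i> * of_int j"
  have a: "a \<noteq> 0"
    using j by (simp add: a_def)
  have e: "a * ee j y * inverse a = ee j y" for y
    using a by simp
  have "((\<lambda>y. ee j y * inverse a) has_vector_derivative ee j y) (at y within {0..1})" for y
    using has_vector_derivative_mult_left[OF ee_deriv[of j y "{0..1}"], of "inverse a"]
    unfolding a_def[symmetric] e .
  from fundamental_theorem_of_calculus[OF _ this]
  have "(ee j has_integral (ee j 1 * inverse a - ee j 0 * inverse a)) {0..1}"
    by simp
  then show ?thesis
    by (simp add: integral_unique)
qed

lemma integral_norm_bound_01:
  fixes f :: "real \<Rightarrow> complex"
  assumes c: "continuous_on {0..1} f" and B: "\<And>x. x \<in> {0..1} \<Longrightarrow> norm (f x) \<le> B"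
  shows "norm (integral {0..1} f) \<le> B"
proof -
  have I: "(f has_integral integral {0..1} f) (cbox 0 1)"
    unfolding cbox_interval by (intro integrable_integral integrable_continuous_interval c)
  have "0 \<le> B"
    using B[of 0] by (auto intro: order.trans[OF norm_ge_zero])
  from has_integral_bound[OF this I] B show ?thesis
    by simp
qed

lemma fcoeff_bound:
  fixes f :: "real \<Rightarrow> complex"
  assumes c: "continuous_on {0..1} f" and B: "\<And>x. x \<in> {0..1} \<Longrightarrow> norm (f x) \<le> B"
  shows "norm (fcoeff f j) \<le> B"
  unfolding fcoeff_def
  by (rule integral_norm_bound_01) (auto intro!: continuous_intros c simp: norm_mult B)

text \<open>Integration by parts: differentiation multiplies the j-th coefficient of a
  1-periodic function by 2 pi i j.\<close>

lemma fcoeff_deriv: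
  fixes f f' :: "real \<Rightarrow> complex"
  assumes d: "\<And>x. (f has_vector_derivative f' x) (at x)" and c: "continuous_on {0..1} f'"
    and p: "f 1 = f 0"
  shows "fcoeff f' j = 2 * pi * \<i> * of_int j * fcoeff f j"
proof -
  have cf: "continuous_on {0..1} f"
    by (rule continuous_at_imp_continuous_on)
       (auto intro: has_vector_derivative_continuous[OF d])
  let ?a = "2 * pi * \<i> * of_int (-j) :: complex"
  have D: "((\<lambda>y. f y * ee (-j) y) has_vector_derivative (f y * (?a * ee (-j) y) + f' y * ee (-j) y))
       (at y within {0..1})" for y
    using has_vector_derivative_mult[OF has_vector_derivative_at_within[OF d]
        ee_deriv[of "-j" y "{0..1}"]] .
  from fundamental_theorem_of_calculus[OF _ D]
  have I: "((\<lambda>y. f y * (?a * ee (-j) y) + f' y * ee (-j) y) has_integral 0) {0..1}"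
    using p by simp
  have I1: "((\<lambda>y. f' y * ee (-j) y) has_integral fcoeff f' j) {0..1}"
    unfolding fcoeff_def
    by (intro integrable_integral integrable_continuous_interval continuous_intros c)
  have I2': "((\<lambda>y. ?a * (f y * ee (-j) y)) has_integral ?a * fcoeff f j) {0..1}"
    unfolding fcoeff_def
    by (intro has_integral_mult_right integrable_integral integrable_continuous_interval
        continuous_intros cf)
  have I2: "((\<lambda>y. f y * (?a * ee (-j) y)) has_integral ?a * fcoeff f j) {0..1}"
    by (rule has_integral_eq[OF _ I2']) (simp only: mult.left_commute)
  from has_integral_unique[OF I has_integral_add[OF I2 I1]]
  have "?a * fcoeff f j + fcoeff f' j = 0"
    by simp
  then show ?thesis
    by (simp add: eq_neg_iff_add_eq_0[symmetric])
qed

lemma fcoeff_decay: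
  fixes f f' f'' :: "real \<Rightarrow> complex"
  assumes d: "\<And>x. (f has_vector_derivative f' x) (at x)"
    and d': "\<And>x. (f' has_vector_derivative f'' x) (at x)"
    and c'': "continuous_on {0..1} f''"
    and per: "f 1 = f 0" "f' 1 = f' 0"
  obtains C where "\<And>j. j \<noteq> 0 \<Longrightarrow> norm (fcoeff f j) \<le> C / (of_int j)^2"
proof -
  obtain B where B: "\<And>y. y \<in> {0..1} \<Longrightarrow> norm (f'' y) \<le> B"
    using compact_imp_bounded[OF compact_continuous_image[OF c'' compact_Icc]]
    unfolding bounded_iff by (metis atLeastAtMost_iff image_eqI)
  have c': "continuous_on {0..1} f'"
    by (rule continuous_at_imp_continuous_on)
       (auto intro: has_vector_derivative_continuous[OF d'])
  have "norm (fcoeff f j) \<le> B / (4 * pi^2) / (of_int j)^2" if j: "j \<noteq> 0" for j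
  proof -
    let ?a = "2 * pi * \<i> * of_int j :: complex"
    have "fcoeff f'' j = ?a * fcoeff f' j"
      by (rule fcoeff_deriv[OF d' c'' per(2)])
    also have "fcoeff f' j = ?a * fcoeff f j"
      by (rule fcoeff_deriv[OF d c' per(1)])
    finally have "norm (fcoeff f'' j) = (4 * pi^2 * (of_int j)^2) * norm (fcoeff f j)"
      by (simp add: norm_mult norm_power power_mult_distrib power2_eq_square)
    moreover have "norm (fcoeff f'' j) \<le> B"
      by (rule fcoeff_bound[OF c'' B])
    moreover have "0 < 4 * pi^2 * (of_int j :: real)^2"
      using j by simp
    ultimately show ?thesis
      by (simp add: field_simps)
  qed
  then show ?thesis
    using that by blast
qed

section \<open>The Abel kernel of a one-sided Fourier series\<close>

text \<open>For a sign s and 0 <= r < 1 put w = r e_s(x - y).  The Abel mean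
  c_0/2 + sum_{k>=1} c_{sk} e_{sk}(x) r^k  of the one-sided series of g is the integral
  of g against  1/2 + w/(1 - w).\<close>

definition abel_w :: "real \<Rightarrow> int \<Rightarrow> real \<Rightarrow> real \<Rightarrow> complex" where
  "abel_w r s x y = of_real r * ee s (x - y)"

definition abel_kernel :: "real \<Rightarrow> int \<Rightarrow> real \<Rightarrow> real \<Rightarrow> complex" where
  "abel_kernel r s x y = 1/2 + abel_w r s x y / (1 - abel_w r s x y)"

lemma norm_abel_w: "0 \<le> r \<Longrightarrow> norm (abel_w r s x y) = r"
  by (simp add: abel_w_def norm_mult)

lemma abel_w_ne_1: "0 \<le> r \<Longrightarrow> r < 1 \<Longrightarrow> abel_w r s x y \<noteq> 1"
  using norm_abel_w[of r s x y] by auto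

lemma norm_1_minus_abel_w: "0 \<le> r \<Longrightarrow> 1 - r \<le> norm (1 - abel_w r s x y)"
  using norm_triangle_ineq2[of 1 "abel_w r s x y"] norm_abel_w[of r s x y] by simp

lemma continuous_abel_w [continuous_intros]: "continuous_on S (abel_w r s x)"
  unfolding abel_w_def[abs_def] by (intro continuous_intros)

lemma continuous_abel_kernel [continuous_intros]:
  "0 \<le> r \<Longrightarrow> r < 1 \<Longrightarrow> continuous_on S (abel_kernel r s x)"
  unfolding abel_kernel_def[abs_def] using abel_w_ne_1[of r s x]
  by (intro continuous_intros) auto

lemma geometric_sum_Suc:
  fixes w :: complex
  assumes "w \<noteq> 1"
  shows "(\<Sum>k<N. w ^ Suc k) = w / (1 - w) - w * w ^ N / (1 - w)"
proof -
  have "(\<Sum>k<N. w ^ Suc k) = w * (\<Sum>k<N. w ^ k)"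
    by (simp add: sum_distrib_left)
  also have "(\<Sum>k<N. w ^ k) = (1 - w ^ N) / (1 - w)"
    using assms by (simp add: sum_gp_strict)
  finally show ?thesis
    using assms by (simp add: diff_divide_distrib right_diff_distrib)
qed

lemma abel_term_integral:
  "fcoeff g (s * int (Suc k)) * ee (s * int (Suc k)) x * of_real r ^ Suc k
     = integral {0..1} (\<lambda>y. g y * abel_w r s x y ^ Suc k)"
proof -
  let ?j = "s * int (Suc k)"
  have "fcoeff g ?j * ee ?j x * of_real r ^ Suc k
      = integral {0..1} (\<lambda>y. g y * ee (-?j) y) * (ee ?j x * of_real r ^ Suc k)"
    by (simp only: fcoeff_def mult.assoc)
  also have "\<dots> = integral {0..1} (\<lambda>y. g y * ee (-?j) y * (ee ?j x * of_real r ^ Suc k))"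
    by (rule integral_mult_left[symmetric])
  also have "\<dots> = integral {0..1} (\<lambda>y. g y * abel_w r s x y ^ Suc k)"
  proof (rule integral_cong)
    fix y
    have "ee (-?j) y * ee ?j x = ee s (x - y) ^ Suc k"
      unfolding ee_neg_mult by (rule ee_mult_nat)
    then show "g y * ee (-?j) y * (ee ?j x * of_real r ^ Suc k) = g y * abel_w r s x y ^ Suc k"
      by (simp add: abel_w_def power_mult_distrib mult_ac)
  qed
  finally show ?thesis .
qed

lemma abel_partial_sum:
  fixes g :: "real \<Rightarrow> complex"
  assumes cg: "continuous_on {0..1} g" and r: "0 \<le> r" "r < 1"
  shows "(\<Sum>k<N. fcoeff g (s * int (Suc k)) * ee (s * int (Suc k)) x * of_real r ^ Suc k)
       = integral {0..1} (\<lambda>y. g y * (abel_w r s x y / (1 - abel_w r s x y)))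
         - integral {0..1} (\<lambda>y. g y * (abel_w r s x y * abel_w r s x y ^ N / (1 - abel_w r s x y)))"
proof -
  let ?W = "abel_w r s x"
  have ne: "?W y \<noteq> 1" "1 - ?W y \<noteq> 0" for y
    using abel_w_ne_1[OF r] by auto
  have "(\<Sum>k<N. fcoeff g (s * int (Suc k)) * ee (s * int (Suc k)) x * of_real r ^ Suc k)
      = integral {0..1} (\<lambda>y. \<Sum>k<N. g y * ?W y ^ Suc k)"
    unfolding abel_term_integral
    by (rule integral_sum[symmetric])
       (auto intro!: integrable_continuous_interval continuous_intros cg)
  also have "\<dots> = integral {0..1}
      (\<lambda>y. g y * (?W y / (1 - ?W y)) - g y * (?W y * ?W y ^ N / (1 - ?W y)))"
  proof (rule integral_cong)
    fix y
    show "(\<Sum>k<N. g y * ?W y ^ Suc k)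
        = g y * (?W y / (1 - ?W y)) - g y * (?W y * ?W y ^ N / (1 - ?W y))"
      by (simp only: sum_distrib_left[symmetric] geometric_sum_Suc[OF ne(1)] right_diff_distrib)
  qed
  also have "\<dots> = integral {0..1} (\<lambda>y. g y * (?W y / (1 - ?W y)))
                   - integral {0..1} (\<lambda>y. g y * (?W y * ?W y ^ N / (1 - ?W y)))"
    by (rule integral_diff) (auto intro!: integrable_continuous_interval continuous_intros cg simp: ne)
  finally show ?thesis .
qed

text \<open>Since |w| = r < 1, the remainder is O(r^N) and the Abel series converges.\<close>

lemma abel_series_sums:
  fixes g :: "real \<Rightarrow> complex"
  assumes cg: "continuous_on {0..1} g" and r: "0 \<le> r" "r < 1"
  shows "(\<lambda>k. fcoeff g (s * int (Suc k)) * ee (s * int (Suc k)) x * of_real r ^ Suc k) sums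
         integral {0..1} (\<lambda>y. g y * (abel_w r s x y / (1 - abel_w r s x y)))"
proof -
  let ?W = "abel_w r s x"
  have ne: "1 - ?W y \<noteq> 0" for y
    using abel_w_ne_1[OF r] by auto
  obtain B where B: "\<And>y. y \<in> {0..1} \<Longrightarrow> norm (g y) \<le> B"
    using compact_imp_bounded[OF compact_continuous_image[OF cg compact_Icc]]
    unfolding bounded_iff by (metis atLeastAtMost_iff image_eqI)
  have B0: "0 \<le> B"
    using B[of 0] by (auto intro: order.trans[OF norm_ge_zero])
  let ?I = "integral {0..1} (\<lambda>y. g y * (?W y / (1 - ?W y)))"
  define E where "E N = integral {0..1} (\<lambda>y. g y * (?W y * ?W y ^ N / (1 - ?W y)))" for N
  have E_bound: "norm (E N) \<le> B * r ^ N / (1 - r)" for N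
    unfolding E_def
  proof (rule integral_norm_bound_01)
    show "continuous_on {0..1} (\<lambda>y. g y * (?W y * ?W y ^ N / (1 - ?W y)))"
      by (auto intro!: continuous_intros cg simp: ne abel_w_ne_1[OF r])
    fix y :: real assume y: "y \<in> {0..1}"
    have "norm (g y * (?W y * ?W y ^ N / (1 - ?W y))) = norm (g y) * (r * r ^ N / norm (1 - ?W y))"
      by (simp add: norm_mult norm_divide norm_power norm_abel_w[OF r(1)])
    also have "\<dots> \<le> B * (1 * r ^ N / (1 - r))"
      using r B[OF y] B0 norm_1_minus_abel_w[OF r(1), of s x y]
      by (intro mult_mono frac_le mult_right_mono) auto
    finally show "norm (g y * (?W y * ?W y ^ N / (1 - ?W y))) \<le> B * r ^ N / (1 - r)"
      by simp
  qed
  have "E \<longlonglongrightarrow> 0"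
  proof (rule Lim_null_comparison)
    show "\<forall>\<^sub>F N in sequentially. norm (E N) \<le> B * r ^ N / (1 - r)"
      using E_bound by simp
    have "(\<lambda>N. r ^ N) \<longlonglongrightarrow> 0"
      by (rule LIMSEQ_power_zero) (use r in simp)
    then show "(\<lambda>N. B * r ^ N / (1 - r)) \<longlonglongrightarrow> 0"
      by (intro tendsto_divide_zero tendsto_mult_right_zero)
  qed
  then have "(\<lambda>N. ?I - E N) \<longlonglongrightarrow> ?I - 0"
    by (intro tendsto_intros)
  then show ?thesis
    unfolding sums_def abel_partial_sum[OF cg r] E_def by simp
qed

lemma abel_mean_integral:
  fixes g :: "real \<Rightarrow> complex"
  assumes cg: "continuous_on {0..1} g" and r: "0 \<le> r" "r < 1"
  shows "fcoeff g 0 / 2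
           + (\<Sum>k. fcoeff g (s * int (Suc k)) * ee (s * int (Suc k)) x * of_real r ^ Suc k)
       = integral {0..1} (\<lambda>y. g y * abel_kernel r s x y)"
proof -
  have ne: "1 - abel_w r s x y \<noteq> 0" for y
    using abel_w_ne_1[OF r, of s x y] by simp
  have "integral {0..1} (\<lambda>y. g y * abel_kernel r s x y)
      = integral {0..1} (\<lambda>y. g y / 2 + g y * (abel_w r s x y / (1 - abel_w r s x y)))"
    by (rule integral_cong) (simp add: abel_kernel_def distrib_left)
  also have "\<dots> = integral {0..1} g / 2
                   + integral {0..1} (\<lambda>y. g y * (abel_w r s x y / (1 - abel_w r s x y)))"
    by (subst integral_add)
       (auto intro!: integrable_continuous_interval continuous_intros cg
             simp: ne abel_w_ne_1[OF r] integral_divide)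
  finally show ?thesis
    using sums_unique[OF abel_series_sums[OF cg r, of s x]]
    by (simp add: fcoeff_def ee_def)
qed

text \<open>Applied to the constant function 1 this shows that the kernel has mean 1/2.\<close>

lemma integral_abel_kernel:
  assumes s: "s \<noteq> 0" and r: "0 \<le> r" "r < 1"
  shows "(abel_kernel r s x has_integral 1/2) {0..1}"
proof -
  have z: "fcoeff (\<lambda>_. 1) (s * int (Suc k)) = 0" for k
    using integral_ee[of "- (s * int (Suc k))"] s by (simp add: fcoeff_def)
  have "(\<lambda>k. fcoeff (\<lambda>_. 1) (s * int (Suc k)) * ee (s * int (Suc k)) x * of_real r ^ Suc k) sums 0"
    unfolding z by simp
  from abel_mean_integral[of "\<lambda>_. 1" r s x] sums_unique[OF this] r
  have "fcoeff (\<lambda>_. 1) 0 / 2 = integral {0..1} (abel_kernel r s x)"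
    by simp
  moreover have "fcoeff (\<lambda>_. 1) 0 = 1"
    by (simp add: fcoeff_def ee_def)
  ultimately have "integral {0..1} (abel_kernel r s x) = 1/2"
    by simp
  moreover have "abel_kernel r s x integrable_on {0..1}"
    by (intro integrable_continuous_interval continuous_intros r)
  ultimately show ?thesis
    by (metis integrable_integral)
qed

text \<open>Writing w = r e^{2 i psi} with S = sin psi, C = cos psi, the identities needed for
  the real and imaginary part of the kernel are polynomial in r, S, C.\<close>

lemma abel_kernel_algebra:
  fixes r S C :: real
  assumes sc: "S^2 + C^2 = 1" and r: "0 \<le> r" "r < 1"
  defines "a \<equiv> r * (1 - 2 * S^2)" and "b \<equiv> 2 * r * S * C"
  shows "(1 - a)^2 + b^2 = (1 - r)^2 + 4 * r * S^2"
    and "\<bar>b\<bar> * \<bar>S\<bar> * 2 \<le> (1 - a)^2 + b^2"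
    and "0 \<le> (1 - a)^2 + b^2 + 2 * (a * (1 - a) - b^2)"
proof -
  have C2: "C^2 = 1 - S^2"
    using sc by simp
  have ab: "a^2 + b^2 = r^2"
  proof -
    have "a^2 + b^2 = r^2 * ((1 - 2*S^2)^2 + 4*S^2*C^2)"
      unfolding a_def b_def by (simp add: power2_eq_square algebra_simps)
    also have "(1 - 2*S^2)^2 + 4*S^2*C^2 = 1"
      unfolding C2 by (simp add: power2_eq_square algebra_simps)
    finally show ?thesis
      by simp
  qed
  have "(1 - a)^2 + b^2 = 1 - 2 * a + (a^2 + b^2)"
    by (simp add: power2_eq_square algebra_simps)
  also have "\<dots> = (1 - r)^2 + 4 * r * S^2"
    unfolding ab unfolding a_def by (simp add: power2_eq_square algebra_simps)
  finally show D: "(1 - a)^2 + b^2 = (1 - r)^2 + 4 * r * S^2" .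
  have "C^2 \<le> 1"
    using C2 zero_le_power2[of S] by linarith
  then have "\<bar>C\<bar> \<le> 1"
    by (simp add: abs_square_le_1)
  have "\<bar>b\<bar> * \<bar>S\<bar> * 2 = 4 * r * S^2 * \<bar>C\<bar>"
    unfolding b_def using r by (simp add: abs_mult power2_eq_square)
  also have "\<dots> \<le> 4 * r * S^2"
    using \<open>\<bar>C\<bar> \<le> 1\<close> r by (simp add: mult_left_le)
  also have "\<dots> \<le> (1 - a)^2 + b^2"
    unfolding D by simp
  finally show "\<bar>b\<bar> * \<bar>S\<bar> * 2 \<le> (1 - a)^2 + b^2" .
  have "(1 - a)^2 + b^2 + 2 * (a * (1 - a) - b^2) = 1 - r^2"
    using ab by (simp add: algebra_simps power2_eq_square)
  then show "0 \<le> (1 - a)^2 + b^2 + 2 * (a * (1 - a) - b^2)"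
    using r by (simp add: abs_square_le_1)
qed

lemma abel_kernel_Re_Im:
  assumes s: "s = 1 \<or> s = -1" and r: "0 \<le> r" "r < 1"
  shows "0 \<le> Re (abel_kernel r s x y)"
    and "\<bar>Im (abel_kernel r s x y)\<bar> * \<bar>sin (pi * (x - y))\<bar> \<le> 1/2"
proof -
  define \<psi> where "\<psi> = pi * of_int s * (x - y)"
  define S where "S = sin \<psi>"
  define C where "C = cos \<psi>"
  define a where "a = r * (1 - 2 * S^2)"
  define b where "b = 2 * r * S * C"
  have sc: "S^2 + C^2 = 1"
    by (simp add: S_def C_def)
  note alg = abel_kernel_algebra[OF sc r, folded a_def b_def]
  have W: "abel_w r s x y = Complex a b"
  proof -
    have "abel_w r s x y = of_real r * cis (2 * \<psi>)"
      by (simp add: abel_w_def ee_cis \<psi>_def mult_ac)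
    moreover have "cos (2*\<psi>) = 1 - 2 * S^2" "sin (2*\<psi>) = 2 * S * C"
      by (simp_all only: S_def C_def cos_double_sin sin_double)
    ultimately show ?thesis
      by (simp add: complex_eq_iff a_def b_def)
  qed
  define D where "D = (1 - a)^2 + b^2"
  have Dpos: "D > 0"
    unfolding D_def alg(1) using r by (intro add_pos_nonneg) auto
  have "Re (abel_kernel r s x y) = 1/2 + (a * (1 - a) - b^2) / D"
    by (simp add: abel_kernel_def W Re_divide D_def power2_eq_square)
  then have ReK: "Re (abel_kernel r s x y) = (D + 2 * (a * (1 - a) - b^2)) / (2 * D)"
    using Dpos by (simp add: field_simps)
  have ImK: "Im (abel_kernel r s x y) = b / D"
    by (simp add: abel_kernel_def W Im_divide D_def power2_eq_square algebra_simps)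
  show "0 \<le> Re (abel_kernel r s x y)"
    unfolding ReK using alg(3) Dpos by (simp add: D_def)
  have "\<bar>sin (pi * (x - y))\<bar> = \<bar>S\<bar>"
    using s by (auto simp: S_def \<psi>_def)
  then have "\<bar>Im (abel_kernel r s x y)\<bar> * \<bar>sin (pi * (x - y))\<bar> = \<bar>b\<bar> * \<bar>S\<bar> / D"
    unfolding ImK using Dpos by simp
  also have "\<dots> \<le> 1/2"
    using alg(2) Dpos by (simp add: D_def field_simps)
  finally show "\<bar>Im (abel_kernel r s x y)\<bar> * \<bar>sin (pi * (x - y))\<bar> \<le> 1/2" .
qed

lemma abel_kernel_circle_bound:
  assumes x: "x \<in> {0..1}" and y: "y \<in> {0..1}" and s: "s = 1 \<or> s = -1"
    and r: "0 \<le> r" "r < 1"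
  shows "\<bar>Im (abel_kernel r s x y)\<bar> * min \<bar>x - y\<bar> (1 - \<bar>x - y\<bar>) \<le> 1/4"
proof -
  let ?k = "\<bar>Im (abel_kernel r s x y)\<bar>"
  have "?k * (2 * min \<bar>x - y\<bar> (1 - \<bar>x - y\<bar>)) \<le> ?k * \<bar>sin (pi * (x - y))\<bar>"
    using sin_circle_dist[OF x y] by (intro mult_left_mono) auto
  also have "\<dots> \<le> 1/2"
    by (rule abel_kernel_Re_Im(2)[OF s r])
  finally show ?thesis
    by simp
qed

text \<open>With coefficients decaying like 1/j^2 the Abel series converges uniformly for
  r in [0,1] (Weierstrass M-test), so its sum is continuous up to r = 1.\<close>

lemma abel_series_continuous:
  fixes g :: "real \<Rightarrow> complex"
  assumes s: "s = 1 \<or> s = -1"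
    and decay: "\<And>j. j \<noteq> 0 \<Longrightarrow> norm (fcoeff g j) \<le> C / (of_int j)^2"
  shows "continuous_on {0..1}
           (\<lambda>r. \<Sum>k. fcoeff g (s * int (Suc k)) * ee (s * int (Suc k)) x * of_real r ^ Suc k)"
proof -
  define f where "f k r = fcoeff g (s * int (Suc k)) * ee (s * int (Suc k)) x * of_real r ^ Suc k"
    for k and r :: real
  have term_bound: "norm (f k r) \<le> C / real (Suc k)^2" if "r \<in> {0..1}" for k r
  proof -
    have sq: "(of_int (s * int (Suc k)) :: real)^2 = real (Suc k)^2"
      using s by (auto simp: power2_eq_square)
    have "norm (f k r) = norm (fcoeff g (s * int (Suc k))) * r ^ Suc k"
      using that by (simp add: f_def norm_mult norm_power)
    also have "\<dots> \<le> norm (fcoeff g (s * int (Suc k)))"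
      using that by (intro mult_left_le power_le_one) auto
    also have "\<dots> \<le> C / real (Suc k)^2"
      using decay[of "s * int (Suc k)"] s sq by auto
    finally show ?thesis .
  qed
  have "summable (\<lambda>k. inverse (real (Suc k) ^ 2))"
    using inverse_power_summable[of 2, where 'a=real] by (subst summable_Suc_iff) simp
  then have summ: "summable (\<lambda>k. C / real (Suc k)^2)"
    using summable_mult[of _ C] by (simp add: divide_inverse)
  have "uniform_limit {0..1} (\<lambda>N r. \<Sum>i<N. f i r) (\<lambda>r. \<Sum>k. f k r) sequentially"
    by (rule Weierstrass_m_test[OF term_bound summ])
  then have "continuous_on {0..1} (\<lambda>r. \<Sum>k. f k r)"
    by (rule uniform_limit_theorem[rotated])
       (auto intro!: always_eventually continuous_intros simp: f_def)
  then show ?thesis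
    by (simp add: f_def)
qed

text \<open>Abel's theorem in the form needed: if the coefficients decay like 1/j^2, every upper
  bound for the real parts of the Abel means (r < 1) is inherited by the series itself.\<close>

lemma abel_boundary_bound:
  fixes g :: "real \<Rightarrow> complex"
  assumes cg: "continuous_on {0..1} g" and s: "s = 1 \<or> s = -1"
    and decay: "\<And>j. j \<noteq> 0 \<Longrightarrow> norm (fcoeff g j) \<le> C / (of_int j)^2"
    and means: "\<And>r. 0 \<le> r \<Longrightarrow> r < 1 \<Longrightarrow>
                  Re (integral {0..1} (\<lambda>y. g y * abel_kernel r s x y)) \<le> B"
  shows "Re (fcoeff g 0 / 2 + (\<Sum>k. fcoeff g (s * int (Suc k)) * ee (s * int (Suc k)) x)) \<le> B"
proof -
  define U where "U r = (\<Sum>k. fcoeff g (s * int (Suc k)) * ee (s * int (Suc k)) x * of_real r ^ Suc k)"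
    for r :: real
  have "continuous_on {0..1} U"
    unfolding U_def[abs_def] by (rule abel_series_continuous[OF s decay])
  then have "(U \<longlongrightarrow> U 1) (at 1 within {0..1})"
    by (simp add: continuous_on_def)
  then have "(U \<longlongrightarrow> U 1) (at_left 1)"
    by (simp add: at_within_Icc_at_left)
  then have lim: "((\<lambda>r. Re (fcoeff g 0 / 2 + U r)) \<longlongrightarrow> Re (fcoeff g 0 / 2 + U 1)) (at_left 1)"
    by (intro tendsto_intros)
  have "\<forall>\<^sub>F r in at_left 1. Re (fcoeff g 0 / 2 + U r) \<le> B"
    using eventually_at_left_real[of 0 1, OF zero_less_one]
  proof (rule eventually_mono)
    fix r :: real assume "r \<in> {0<..<1}"
    then show "Re (fcoeff g 0 / 2 + U r) \<le> B"
      using means[of r] abel_mean_integral[OF cg, of r s x] by (simp add: U_def)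
  qed
  then have "Re (fcoeff g 0 / 2 + U 1) \<le> B"
    by (rule tendsto_upperbound[OF lim]) simp
  then show ?thesis
    by (simp add: U_def)
qed

section \<open>A majorant for the conjugate part\<close>

text \<open>For a scale eta > 0, the function  maj eta a = pi / (4 max a eta)  majorises the
  contribution of |theta x - theta y| |Im K_r(x,y)| at distance a; its primitive
  maj_prim is explicit, and integrating over the circle costs 2 maj_prim eta 1.\<close>

definition maj :: "real \<Rightarrow> real \<Rightarrow> real" where
  "maj \<eta> a = pi / (4 * max a \<eta>)"

definition maj_prim :: "real \<Rightarrow> real \<Rightarrow> real" where
  "maj_prim \<eta> a = pi / 4 * (min a \<eta> / \<eta> + ln (max a \<eta> / \<eta>))"

lemma maj_nonneg: "0 < \<eta> \<Longrightarrow> 0 \<le> maj \<eta> a"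
  by (simp add: maj_def max_def)

lemma maj_prim_0 [simp]: "0 < \<eta> \<Longrightarrow> maj_prim \<eta> 0 = 0"
  by (simp add: maj_prim_def)

lemma maj_prim_1: "0 < \<eta> \<Longrightarrow> \<eta> \<le> 1 \<Longrightarrow> maj_prim \<eta> 1 = pi / 4 * (1 + ln (1 / \<eta>))"
  by (simp add: maj_prim_def min_def max_def)

lemma continuous_maj_prim: "0 < \<eta> \<Longrightarrow> continuous_on S (maj_prim \<eta>)"
  unfolding maj_prim_def[abs_def] by (intro continuous_intros) (auto simp: max_def)

lemma maj_prim_deriv:
  assumes e: "0 < \<eta>" and a: "0 < a" "a \<noteq> \<eta>"
  shows "(maj_prim \<eta> has_real_derivative maj \<eta> a) (at a)"
proof (cases "a < \<eta>")
  case True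
  have "((\<lambda>b. pi / 4 * (b / \<eta>)) has_real_derivative maj \<eta> a) (at a)"
    using True e by (auto intro!: derivative_eq_intros simp: maj_def max_def)
  then show ?thesis
    by (rule has_field_derivative_transform_within_open[where S="{..<\<eta>}"])
       (use True in \<open>auto simp: maj_prim_def min_def max_def\<close>)
next
  case False
  then have a2: "\<eta> < a"
    using a by simp
  have "((\<lambda>b. pi / 4 * (1 + ln (b / \<eta>))) has_real_derivative maj \<eta> a) (at a)"
    using a2 e by (auto intro!: derivative_eq_intros simp: maj_def max_def field_simps)
  then show ?thesis
    by (rule has_field_derivative_transform_within_open[where S="{\<eta><..}"])
       (use a2 e in \<open>auto simp: maj_prim_def min_def max_def\<close>)
qed

lemma maj_prim_comp_deriv:
  assumes e: "0 < \<eta>" and "0 < p + q * y" "p + q * y \<noteq> \<eta>"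
  shows "((\<lambda>y. maj_prim \<eta> (p + q * y)) has_real_derivative maj \<eta> (p + q * y) * q) (at y)"
  by (rule DERIV_chain2[where g="\<lambda>y. p + q * y", OF maj_prim_deriv[OF e assms(2,3)]])
     (auto intro!: derivative_eq_intros)

lemma integral_maj:
  assumes e: "0 < \<eta>" and x: "0 \<le> x" "x \<le> 1"
  shows "((\<lambda>y. maj \<eta> \<bar>x - y\<bar> + maj \<eta> (1 - \<bar>x - y\<bar>)) has_integral 2 * maj_prim \<eta> 1) {0..1}"
proof -
  have cont: "continuous_on S (\<lambda>y. maj_prim \<eta> (f y))" if "continuous_on S f" for S f
    by (rule continuous_on_compose2[OF continuous_maj_prim[OF e] that]) auto
  have left: "((\<lambda>y. maj \<eta> (x - y) + maj \<eta> (1 - x + y)) has_integral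
        ((- maj_prim \<eta> (x - x) + maj_prim \<eta> (1 - x + x))
          - (- maj_prim \<eta> (x - 0) + maj_prim \<eta> (1 - x + 0)))) {0..x}"
  proof (rule fundamental_theorem_of_calculus_interior_strong[where S="{x - \<eta>, x - 1 + \<eta>}"])
    show "continuous_on {0..x} (\<lambda>y. - maj_prim \<eta> (x - y) + maj_prim \<eta> (1 - x + y))"
      by (intro continuous_intros cont)
    fix y assume y: "y \<in> {0<..<x} - {x - \<eta>, x - 1 + \<eta>}"
    have "((\<lambda>y. - maj_prim \<eta> (x + (-1) * y) + maj_prim \<eta> ((1 - x) + 1 * y)) has_real_derivative
           - (maj \<eta> (x + (-1) * y) * (-1)) + maj \<eta> ((1 - x) + 1 * y) * 1) (at y)"
      using y x by (intro DERIV_add DERIV_minus maj_prim_comp_deriv e) auto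
    then show "((\<lambda>y. - maj_prim \<eta> (x - y) + maj_prim \<eta> (1 - x + y)) has_vector_derivative
           maj \<eta> (x - y) + maj \<eta> (1 - x + y)) (at y)"
      by (simp add: has_real_derivative_iff_has_vector_derivative algebra_simps)
  qed (use x in auto)
  have right: "((\<lambda>y. maj \<eta> (y - x) + maj \<eta> (1 - y + x)) has_integral
        ((maj_prim \<eta> (1 - x) - maj_prim \<eta> (1 - 1 + x))
          - (maj_prim \<eta> (x - x) - maj_prim \<eta> (1 - x + x)))) {x..1}"
  proof (rule fundamental_theorem_of_calculus_interior_strong[where S="{x + \<eta>, x + 1 - \<eta>}"])
    show "continuous_on {x..1} (\<lambda>y. maj_prim \<eta> (y - x) - maj_prim \<eta> (1 - y + x))"
      by (intro continuous_intros cont)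
    fix y assume y: "y \<in> {x<..<1} - {x + \<eta>, x + 1 - \<eta>}"
    have "((\<lambda>y. maj_prim \<eta> ((- x) + 1 * y) - maj_prim \<eta> ((1 + x) + (-1) * y)) has_real_derivative
           maj \<eta> ((- x) + 1 * y) * 1 - maj \<eta> ((1 + x) + (-1) * y) * (-1)) (at y)"
      using y x by (intro DERIV_diff maj_prim_comp_deriv e) auto
    then show "((\<lambda>y. maj_prim \<eta> (y - x) - maj_prim \<eta> (1 - y + x)) has_vector_derivative
           maj \<eta> (y - x) + maj \<eta> (1 - y + x)) (at y)"
      by (simp add: has_real_derivative_iff_has_vector_derivative algebra_simps)
  qed (use x in auto)
  have left': "((\<lambda>y. maj \<eta> \<bar>x - y\<bar> + maj \<eta> (1 - \<bar>x - y\<bar>)) has_integral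
        ((- maj_prim \<eta> (x - x) + maj_prim \<eta> (1 - x + x))
          - (- maj_prim \<eta> (x - 0) + maj_prim \<eta> (1 - x + 0)))) {0..x}"
    by (rule has_integral_eq[OF _ left]) (auto simp: algebra_simps)
  have right': "((\<lambda>y. maj \<eta> \<bar>x - y\<bar> + maj \<eta> (1 - \<bar>x - y\<bar>)) has_integral
        ((maj_prim \<eta> (1 - x) - maj_prim \<eta> (1 - 1 + x))
          - (maj_prim \<eta> (x - x) - maj_prim \<eta> (1 - x + x)))) {x..1}"
    by (rule has_integral_eq[OF _ right]) (auto simp: algebra_simps)
  from has_integral_combine[OF x left' right'] show ?thesis
    using e by simp
qed

section \<open>Trigonometric polynomials as entire functions\<close>

text \<open>Replacing x by a complex variable turns a trigonometric polynomial into an entire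
  function; this is the cheapest way to differentiate it and its logarithm.\<close>

definition ctrig :: "(int \<Rightarrow> complex) \<Rightarrow> complex \<Rightarrow> complex" where
  "ctrig c z = (\<Sum>j\<in>supp c. c j * exp (2 * pi * \<i> * of_int j * z))"

definition ctrig' :: "(int \<Rightarrow> complex) \<Rightarrow> complex \<Rightarrow> complex" where
  "ctrig' c z = (\<Sum>j\<in>supp c. c j * (2 * pi * \<i> * of_int j) * exp (2 * pi * \<i> * of_int j * z))"

definition ctrig'' :: "(int \<Rightarrow> complex) \<Rightarrow> complex \<Rightarrow> complex" where
  "ctrig'' c z =
     (\<Sum>j\<in>supp c. c j * (2 * pi * \<i> * of_int j)^2 * exp (2 * pi * \<i> * of_int j * z))"

lemma ctrig_deriv: "(ctrig c has_field_derivative ctrig' c z) (at z)"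
  unfolding ctrig_def ctrig'_def
  by (auto intro!: derivative_eq_intros sum.cong simp: mult_ac)

lemma ctrig'_deriv: "(ctrig' c has_field_derivative ctrig'' c z) (at z)"
  unfolding ctrig''_def ctrig'_def
  by (auto intro!: derivative_eq_intros sum.cong simp: mult_ac power2_eq_square)

lemma trig_eval_ctrig: "trig_eval c x = ctrig c (of_real x)"
  by (simp add: trig_eval_def ctrig_def ee_def)

lemma ctrig_real: "ctrig c (of_real x) = (\<Sum>j\<in>supp c. c j * ee j x)"
  by (simp add: ctrig_def ee_def)

lemma ctrig'_real: "ctrig' c (of_real x) = (\<Sum>j\<in>supp c. c j * (2 * pi * \<i> * of_int j) * ee j x)"
  by (simp add: ctrig'_def ee_def)

lemma ctrig''_real:
  "ctrig'' c (of_real x) = (\<Sum>j\<in>supp c. c j * (2 * pi * \<i> * of_int j)^2 * ee j x)"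
  by (simp add: ctrig''_def ee_def)

lemma ctrig_period:
  "ctrig c (of_real (x + of_int k)) = ctrig c (of_real x)"
  "ctrig' c (of_real (x + of_int k)) = ctrig' c (of_real x)"
  "ctrig'' c (of_real (x + of_int k)) = ctrig'' c (of_real x)"
  by (simp_all only: ctrig_real ctrig'_real ctrig''_real ee_period)

lemma continuous_ctrig [continuous_intros]:
  "continuous_on S (ctrig c)" "continuous_on S (ctrig' c)" "continuous_on S (ctrig'' c)"
  unfolding ctrig_def ctrig'_def ctrig''_def by (intro continuous_intros)+

text \<open>The bound lambda(rho, tau) of the theorem: rho controls the Lipschitz constant of
  the argument of t and tau its size.\<close>

definition lam_bound :: "real \<Rightarrow> real \<Rightarrow> real" where
  "lam_bound \<rho> \<tau> = sqrt (exp \<tau>) * exp (pi/2) * (2 * max 1 (1 / (2 * exp 1 * \<rho>))) powr (pi/2)"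

lemma lam_bound_pos: "0 < \<rho> \<Longrightarrow> 0 < lam_bound \<rho> \<tau>"
  by (simp add: lam_bound_def)

section \<open>The estimate for a positive trigonometric polynomial\<close>

locale pos_trig_poly =
  fixes c :: "int \<Rightarrow> complex"
  assumes fin: "finite (supp c)" and nc: "nonconstant c"
    and pos: "\<And>x. Re (trig_eval c x) > 0"
begin

text \<open>The argument theta = Im lg is
  L-Lipschitz, and eta = pi / L is the scale below which this beats the trivial bound
  |theta| < pi/2.\<close>

definition "lg x = Ln (ctrig c (of_real x))"
definition "lg' x = ctrig' c (of_real x) / ctrig c (of_real x)"
definition "lg'' x = (ctrig'' c (of_real x) * ctrig c (of_real x)
                        - ctrig' c (of_real x) * ctrig' c (of_real x))
                     / (ctrig c (of_real x) * ctrig c (of_real x))"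
definition "m = min_re (trig_eval c)"
definition "M = sup_norm (trig_eval c)"
definition "n = n_deg c"
definition "l1 = coeff_l1 c"
definition "K = max 1 (l1 / m)"
definition "L = 2 * pi * real_of_int n * K"
definition "\<eta> = pi / L"
definition "\<theta> y = Im (lg y)"

lemma Re_ctrig_pos: "Re (ctrig c (of_real x)) > 0"
  using pos[of x] by (simp add: trig_eval_ctrig)

lemma ctrig_nonzero: "ctrig c (of_real x) \<noteq> 0"
  using Re_ctrig_pos[of x] by auto

lemma lg_deriv: "(lg has_vector_derivative lg' x) (at x within S)"
proof -
  have "ctrig c (of_real x) \<notin> \<real>\<^sub>\<le>\<^sub>0"
    using Re_ctrig_pos[of x] by (auto simp: complex_nonpos_Reals_iff)
  then have "((\<lambda>z. Ln (ctrig c z)) has_field_derivative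
               (inverse (ctrig c (of_real x)) * ctrig' c (of_real x))) (at (of_real x))"
    by (rule DERIV_chain2[OF has_field_derivative_Ln ctrig_deriv])
  from has_vector_derivative_real_field[OF this] show ?thesis
    by (simp add: lg_def[abs_def] lg'_def field_simps ctrig_nonzero)
qed

lemma lg'_deriv: "(lg' has_vector_derivative lg'' x) (at x within S)"
proof -
  have "((\<lambda>z. ctrig' c z / ctrig c z) has_field_derivative lg'' x) (at (of_real x))"
    unfolding lg''_def by (rule DERIV_divide[OF ctrig'_deriv ctrig_deriv ctrig_nonzero])
  from has_vector_derivative_real_field[OF this] show ?thesis
    by (simp add: lg'_def[abs_def])
qed

lemma continuous_lg: "continuous_on S lg"
  by (rule continuous_at_imp_continuous_on)
     (auto intro: has_vector_derivative_continuous[OF lg_deriv])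

lemma continuous_lg'': "continuous_on S lg''"
  unfolding lg''_def
  by (intro continuous_intros continuous_on_compose2[OF continuous_ctrig(1) continuous_on_of_real]
      continuous_on_compose2[OF continuous_ctrig(2) continuous_on_of_real]
      continuous_on_compose2[OF continuous_ctrig(3) continuous_on_of_real])
     (auto simp: ctrig_nonzero)

lemma lg_period: "lg (x + of_int k) = lg x" "lg' (x + of_int k) = lg' x"
  by (simp_all only: lg_def lg'_def ctrig_period)

lemma continuous_trig_eval: "continuous_on S (trig_eval c)"
  unfolding trig_eval_ctrig
  by (intro continuous_on_compose2[OF continuous_ctrig(1) continuous_on_of_real]) auto

lemma trig_eval_period: "trig_eval c (y + of_int k) = trig_eval c y"
  unfolding trig_eval_ctrig ctrig_period ..

lemma m_le: "m \<le> Re (trig_eval c x)"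
proof -
  obtain y k where y: "y \<in> {0..1}" "x = y + of_int k"
    using periodic_representative by blast
  have "bounded ((\<lambda>x. Re (trig_eval c x)) ` {0..1})"
    by (intro compact_imp_bounded compact_continuous_image continuous_intros
        continuous_trig_eval) auto
  then have "m \<le> Re (trig_eval c y)"
    unfolding m_def min_re_def using y by (intro cINF_lower bounded_imp_bdd_below) auto
  then show ?thesis
    unfolding y(2) trig_eval_period .
qed

lemma m_pos: "m > 0"
proof -
  have cont: "continuous_on {0..1} (\<lambda>x. Re (trig_eval c x))"
    by (intro continuous_intros continuous_trig_eval)
  obtain x0 where x0: "x0 \<in> {0..1::real}"
    "\<And>y. y \<in> {0..1} \<Longrightarrow> Re (trig_eval c x0) \<le> Re (trig_eval c y)"
    using continuous_attains_inf[OF compact_Icc _ cont] by auto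
  have "Re (trig_eval c x0) \<le> m"
    unfolding m_def min_re_def by (rule cINF_greatest) (use x0 in auto)
  with pos[of x0] show ?thesis
    by linarith
qed

lemma M_ge: "norm (trig_eval c x) \<le> M"
proof -
  obtain y k where y: "y \<in> {0..1}" "x = y + of_int k"
    using periodic_representative by blast
  have "bounded ((\<lambda>x. norm (trig_eval c x)) ` {0..1})"
    by (intro compact_imp_bounded compact_continuous_image continuous_intros
        continuous_trig_eval) auto
  then have "norm (trig_eval c y) \<le> M"
    unfolding M_def sup_norm_def using y by (intro cSUP_upper bounded_imp_bdd_above) auto
  then show ?thesis
    unfolding y(2) trig_eval_period .
qed

lemma M_pos: "M > 0"
  using pos[of 0] complex_Re_le_cmod[of "trig_eval c 0"] M_ge[of 0] by linarith

lemma abs_le_n: "j \<in> supp c \<Longrightarrow> \<bar>j\<bar> \<le> n"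
proof -
  assume j: "j \<in> supp c"
  have "j \<le> Max (supp c)" "Min (supp c) \<le> j"
    using j fin by auto
  then show ?thesis
    by (auto simp: n_def n_deg_def n_plus_def n_minus_def)
qed

lemma n_ge_1: "n \<ge> 1"
proof -
  obtain j where "j \<noteq> 0" "c j \<noteq> 0"
    using nc by (auto simp: nonconstant_def)
  then show ?thesis
    using abs_le_n[of j] by (simp add: supp_def)
qed

lemma l1_pos: "l1 > 0"
proof -
  obtain j where "j \<noteq> 0" "c j \<noteq> 0"
    using nc by (auto simp: nonconstant_def)
  then have "norm (c j) > 0" "norm (c j) \<le> l1"
    unfolding l1_def coeff_l1_def using fin by (auto simp: supp_def intro!: member_le_sum)
  then show ?thesis
    by linarith
qed

lemma K_ge_1: "K \<ge> 1"
  by (simp add: K_def)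

lemma L_ge: "L \<ge> 2 * pi"
proof -
  have "2 * pi * 1 * 1 \<le> 2 * pi * real_of_int n * K"
    using n_ge_1 K_ge_1 by (intro mult_mono) auto
  then show ?thesis
    by (simp add: L_def)
qed

lemma L_pos: "L > 0"
  using L_ge pi_gt_zero by linarith

lemma eta_pos: "\<eta> > 0"
  using L_pos by (simp add: \<eta>_def)

text \<open>Bernstein-type bound: |t'| <= 2 pi n ||t^||_1, hence |lg'| = |t'/t| <= L.\<close>

lemma norm_lg': "norm (lg' x) \<le> L"
proof -
  have "norm (ctrig' c (of_real x))
      \<le> (\<Sum>j\<in>supp c. norm (c j * (2 * pi * \<i> * of_int j) * ee j x))"
    unfolding ctrig'_real by (rule norm_sum)
  also have "\<dots> \<le> (\<Sum>j\<in>supp c. norm (c j) * (2 * pi * n))"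
  proof (rule sum_mono)
    fix j assume j: "j \<in> supp c"
    have "norm (c j * (2 * pi * \<i> * of_int j) * ee j x) = norm (c j) * (2 * pi * \<bar>of_int j\<bar>)"
      by (simp add: norm_mult)
    also have "\<dots> \<le> norm (c j) * (2 * pi * n)"
      using abs_le_n[OF j] by (intro mult_left_mono) auto
    finally show "norm (c j * (2 * pi * \<i> * of_int j) * ee j x) \<le> norm (c j) * (2 * pi * n)" .
  qed
  also have "\<dots> = (\<Sum>j\<in>supp c. norm (c j)) * (2 * pi * n)"
    by (rule sum_distrib_right[symmetric])
  also have "\<dots> = 2 * pi * n * l1"
    by (simp add: l1_def coeff_l1_def)
  finally have num: "norm (ctrig' c (of_real x)) \<le> 2 * pi * n * l1" .
  have den: "m \<le> norm (ctrig c (of_real x))"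
    using m_le[of x] complex_Re_le_cmod[of "ctrig c (of_real x)"] by (simp add: trig_eval_ctrig)
  have "norm (lg' x) \<le> 2 * pi * n * l1 / m"
    unfolding lg'_def norm_divide
    by (rule frac_le) (use num den m_pos n_ge_1 l1_pos in auto)
  also have "\<dots> = 2 * pi * n * (l1 / m)"
    by simp
  also have "\<dots> \<le> 2 * pi * n * K"
    using n_ge_1 by (intro mult_left_mono) (auto simp: K_def)
  finally show ?thesis
    by (simp add: L_def)
qed

lemma lg_lipschitz: "norm (lg x - lg y) \<le> L * \<bar>x - y\<bar>"
proof -
  have "norm (lg x - lg y) \<le> L * norm (x - y)"
  proof (rule differentiable_bound[where S=UNIV and f'="\<lambda>x h. h *\<^sub>R lg' x"])
    fix z :: real
    show "(lg has_derivative (\<lambda>h. h *\<^sub>R lg' z)) (at z within UNIV)"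
      using lg_deriv[of z] by (simp add: has_vector_derivative_def)
    show "onorm (\<lambda>h. h *\<^sub>R lg' z) \<le> L"
      using onorm_scaleR_left[of "\<lambda>h::real. h" "lg' z"] norm_lg'[of z]
      by (simp add: onorm_id bounded_linear_ident)
  qed auto
  then show ?thesis
    by simp
qed

lemma theta_bound: "\<bar>\<theta> y\<bar> < pi / 2"
  unfolding \<theta>_def lg_def by (rule Re_Ln_pos_lt_imp) (rule Re_ctrig_pos)

lemma theta_circle_lipschitz:
  assumes "x \<in> {0..1}" "y \<in> {0..1}"
  shows "\<bar>\<theta> x - \<theta> y\<bar> \<le> L * min \<bar>x - y\<bar> (1 - \<bar>x - y\<bar>)"
proof -
  have lip: "\<bar>\<theta> u - \<theta> v\<bar> \<le> L * \<bar>u - v\<bar>" for u v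
    using lg_lipschitz[of u v] abs_Im_le_cmod[of "lg u - lg v"] by (simp add: \<theta>_def)
  have shift: "\<theta> (u + 1) = \<theta> u" for u
    using lg_period(1)[of u 1] by (simp add: \<theta>_def)
  have "\<bar>\<theta> x - \<theta> y\<bar> \<le> L * (1 - \<bar>x - y\<bar>)"
  proof (cases "y \<le> x")
    case True
    then have "\<bar>x - (y + 1)\<bar> = 1 - \<bar>x - y\<bar>"
      using assms by simp
    then show ?thesis
      using lip[of x "y + 1"] by (simp add: shift)
  next
    case False
    then have "\<bar>(x + 1) - y\<bar> = 1 - \<bar>x - y\<bar>"
      using assms by simp
    then show ?thesis
      using lip[of "x + 1" y] by (simp add: shift)
  qed
  then show ?thesis
    using lip[of x y] by (simp add: min_def)
qed

text \<open>Pointwise majorant of the conjugate part: far from the diagonal use |theta| < pi/2,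
  near it the Lipschitz bound; in both cases the sine factor of the kernel estimate is
  controlled by Jordan's inequality.\<close>

lemma conj_part_majorant:
  assumes x: "x \<in> {0..1}" and y: "y \<in> {0..1}" and s: "s = 1 \<or> s = -1"
    and r: "0 \<le> r" "r < 1"
  shows "\<bar>\<theta> x - \<theta> y\<bar> * \<bar>Im (abel_kernel r s x y)\<bar> \<le> maj \<eta> \<bar>x - y\<bar> + maj \<eta> (1 - \<bar>x - y\<bar>)"
proof -
  define a where "a = \<bar>x - y\<bar>"
  define d where "d = min a (1 - a)"
  define k where "k = \<bar>Im (abel_kernel r s x y)\<bar>"
  define \<delta> where "\<delta> = \<bar>\<theta> x - \<theta> y\<bar>"
  have k0: "0 \<le> k"
    by (simp add: k_def)
  have kd: "k * d \<le> 1/4"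
    using abel_kernel_circle_bound[OF x y s r] by (simp add: k_def d_def a_def)
  have "\<delta> * k \<le> pi / (4 * max d \<eta>)"
  proof (cases "\<eta> \<le> d")
    case True
    have "\<delta> \<le> pi"
      using theta_bound[of x] theta_bound[of y] by (simp add: \<delta>_def)
    then have "\<delta> * k \<le> pi * k"
      using k0 by (intro mult_right_mono) auto
    also have "\<dots> \<le> pi / (4 * d)"
      using kd True eta_pos by (simp add: field_simps)
    finally show ?thesis
      using True by (simp add: max_def)
  next
    case False
    have "\<delta> * k \<le> (L * d) * k"
      using theta_circle_lipschitz[OF x y] k0
      by (intro mult_right_mono) (auto simp: \<delta>_def d_def a_def)
    also have "\<dots> \<le> L * (1/4)"
      using kd L_pos by (simp add: mult.assoc mult.left_commute[of d])
    also have "\<dots> = pi / (4 * \<eta>)"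
      using L_pos by (simp add: \<eta>_def)
    finally show ?thesis
      using False by (simp add: max_def)
  qed
  also have "pi / (4 * max d \<eta>) \<le> maj \<eta> a + maj \<eta> (1 - a)"
    using maj_nonneg[OF eta_pos, of a] maj_nonneg[OF eta_pos, of "1 - a"]
    by (cases "a \<le> 1 - a") (auto simp: d_def maj_def)
  finally show ?thesis
    by (simp add: \<delta>_def k_def a_def)
qed

lemma Re_lg_le: "Re (lg y) \<le> ln M"
  using M_ge[of y] ctrig_nonzero[of y] M_pos
  by (simp add: lg_def trig_eval_ctrig)

text \<open>Bound for the Abel means of A^{+-} lg: compare Re (lg y K) with
  Re ((ln M + i theta x) K) using Re K >= 0 and the majorant, then integrate.\<close>

lemma Re_abel_mean_bound:
  assumes x: "x \<in> {0..1}" and s: "s = 1 \<or> s = -1" and r: "0 \<le> r" "r < 1"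
  shows "Re (integral {0..1} (\<lambda>y. lg y * abel_kernel r s x y)) \<le> ln M / 2 + 2 * maj_prim \<eta> 1"
proof -
  define \<kappa> where "\<kappa> = Complex (ln M) (\<theta> x)"
  have Ilg: "((\<lambda>y. lg y * abel_kernel r s x y) has_integral
               integral {0..1} (\<lambda>y. lg y * abel_kernel r s x y)) {0..1}"
    by (intro integrable_integral integrable_continuous_interval continuous_intros continuous_lg r)
  have Iup: "((\<lambda>y. Re (\<kappa> * abel_kernel r s x y) + (maj \<eta> \<bar>x - y\<bar> + maj \<eta> (1 - \<bar>x - y\<bar>)))
              has_integral (Re (\<kappa> * (1/2)) + 2 * maj_prim \<eta> 1)) {0..1}"
    using x s by (intro has_integral_add has_integral_Re has_integral_mult_right
        integral_abel_kernel integral_maj eta_pos r) auto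
  have "Re (integral {0..1} (\<lambda>y. lg y * abel_kernel r s x y))
          \<le> Re (\<kappa> * (1/2)) + 2 * maj_prim \<eta> 1"
  proof (rule has_integral_le[OF has_integral_Re[OF Ilg] Iup])
    fix y :: real assume y: "y \<in> {0..1}"
    let ?K = "abel_kernel r s x y"
    have "Re (lg y) * Re ?K \<le> ln M * Re ?K"
      using Re_lg_le abel_kernel_Re_Im(1)[OF s r] by (rule mult_right_mono)
    moreover have "(\<theta> x - \<theta> y) * Im ?K \<le> \<bar>\<theta> x - \<theta> y\<bar> * \<bar>Im ?K\<bar>"
      by (metis abs_ge_self abs_mult)
    moreover note conj_part_majorant[OF x y s r]
    ultimately show "Re (lg y * ?K) \<le> Re (\<kappa> * ?K) + (maj \<eta> \<bar>x - y\<bar> + maj \<eta> (1 - \<bar>x - y\<bar>))"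
      by (simp add: \<kappa>_def \<theta>_def algebra_simps)
  qed
  then show ?thesis
    by (simp add: \<kappa>_def)
qed

lemma lg_coeff_decay:
  obtains C where "\<And>j. j \<noteq> 0 \<Longrightarrow> norm (fcoeff lg j) \<le> C / (of_int j)^2"
proof -
  have "lg 1 = lg 0" "lg' 1 = lg' 0"
    using lg_period[of 0 1] by simp_all
  from fcoeff_decay[OF lg_deriv lg'_deriv continuous_lg'' this] that show ?thesis
    by blast
qed

lemma Re_A_inf_bound:
  assumes x: "x \<in> {0..1}"
  shows "Re (A_inf s (\<lambda>y. Ln (trig_eval c y)) x) \<le> ln M / 2 + 2 * maj_prim \<eta> 1"
proof -
  define \<sigma> :: int where "\<sigma> = (if s then 1 else -1)"
  have \<sigma>: "\<sigma> = 1 \<or> \<sigma> = -1"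
    by (simp add: \<sigma>_def)
  obtain C where C: "\<And>j. j \<noteq> 0 \<Longrightarrow> norm (fcoeff lg j) \<le> C / (of_int j)^2"
    using lg_coeff_decay by blast
  have "A_inf s (\<lambda>y. Ln (trig_eval c y)) x
      = fcoeff lg 0 / 2 + (\<Sum>k. fcoeff lg (\<sigma> * int (Suc k)) * ee (\<sigma> * int (Suc k)) x)"
    by (simp add: A_inf_def Let_def \<sigma>_def lg_def[abs_def] trig_eval_ctrig)
  also have "Re \<dots> \<le> ln M / 2 + 2 * maj_prim \<eta> 1"
    by (rule abel_boundary_bound[OF continuous_lg \<sigma> C Re_abel_mean_bound[OF x \<sigma>]])
  finally show ?thesis .
qed

lemma Psi_pointwise_bound:
  assumes x: "x \<in> {0..1}"
  shows "norm (Psi s c x) \<le> sqrt M * exp (pi/2) * (2 * K) powr (pi/2) * real_of_int n powr (pi/2)"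
proof -
  have nK: "1 / \<eta> = 2 * K * real_of_int n"
    using pi_gt_zero by (simp add: \<eta>_def L_def)
  have "\<eta> \<le> 1"
    using L_ge L_pos by (simp add: \<eta>_def)
  then have maj1: "2 * maj_prim \<eta> 1 = pi / 2 + pi / 2 * ln (2 * K * real_of_int n)"
    using eta_pos by (simp add: maj_prim_1 nK algebra_simps)
  have "norm (Psi s c x) = exp (Re (A_inf s (\<lambda>y. Ln (trig_eval c y)) x))"
    by (simp add: Psi_def)
  also have "\<dots> \<le> exp (ln M / 2 + 2 * maj_prim \<eta> 1)"
    using Re_A_inf_bound[OF x, of s] by simp
  also have "\<dots> = exp (ln M / 2) * exp (pi/2) * exp (pi / 2 * ln (2 * K * real_of_int n))"
    unfolding maj1 by (simp add: exp_add)
  also have "exp (ln M / 2) = sqrt M"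
    using M_pos by (simp add: powr_half_sqrt[symmetric] powr_def)
  also have "exp (pi / 2 * ln (2 * K * real_of_int n)) = (2 * K) powr (pi/2) * real_of_int n powr (pi/2)"
    using n_ge_1 K_ge_1 by (simp add: powr_def ln_mult exp_add algebra_simps)
  finally show ?thesis
    by (simp add: mult_ac)
qed

lemma M_le_exp_tau: "M \<le> exp (tau c)"
proof -
  have "ln M \<le> ln (M + m / 2)"
    using M_pos m_pos by simp
  also have "\<dots> \<le> tau c"
    by (simp add: tau_def M_def[symmetric] m_def[symmetric])
  finally have "exp (ln M) \<le> exp (tau c)"
    by simp
  then show ?thesis
    using M_pos by simp
qed

lemma K_le_rho: "K \<le> max 1 (1 / (2 * exp 1 * rho c))"
proof (cases "m / (2 * exp 1 * l1) \<le> 1")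
  case True
  then have "rho c = m / (2 * exp 1 * l1)"
    by (simp add: rho_def min_def m_def[symmetric] l1_def[symmetric])
  then have "1 / (2 * exp 1 * rho c) = l1 / m"
    using m_pos l1_pos by simp
  then show ?thesis
    by (simp add: K_def)
next
  case False
  have "l1 \<le> 2 * exp 1 * l1"
    using l1_pos exp_ge_add_one_self[of 1] by simp
  also have "\<dots> < m"
    using False m_pos l1_pos by (simp add: field_simps)
  finally have "l1 / m \<le> 1"
    using m_pos by simp
  then show ?thesis
    by (simp add: K_def)
qed

lemma sup_norm_Psi_bound:
  "sup_norm (Psi s c) \<le> lam_bound (rho c) (tau c) * real_of_int n powr (pi/2)"
  unfolding sup_norm_def
proof (rule cSUP_least)
  fix x :: real assume x: "x \<in> {0..1}"
  have "norm (Psi s c x) \<le> sqrt M * exp (pi/2) * (2 * K) powr (pi/2) * real_of_int n powr (pi/2)"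
    by (rule Psi_pointwise_bound[OF x])
  also have "\<dots> \<le> lam_bound (rho c) (tau c) * real_of_int n powr (pi/2)"
    unfolding lam_bound_def
    using M_le_exp_tau K_le_rho K_ge_1 M_pos
    by (intro mult_right_mono mult_mono powr_mono2) auto
  finally show "norm (Psi s c x) \<le> lam_bound (rho c) (tau c) * real_of_int n powr (pi/2)" .
qed simp

end

theorem theorem2:
  shows "\<exists>lam :: real \<Rightarrow> real \<Rightarrow> real.
    (\<forall>a b. a > 0 \<and> b > 0 \<longrightarrow> lam a b > 0) \<and>
    (\<forall>c s. is_trig_poly c \<and> nonconstant c \<and> (\<forall>x. Re (trig_eval c x) > 0) \<longrightarrow>
       sup_norm (Psi s c) \<le> lam (rho c) (tau c) * real_of_int (n_deg c) powr (pi / 2))"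
proof (intro exI[of _ lam_bound] conjI allI impI)
  fix a b :: real
  assume "a > 0 \<and> b > 0"
  then show "lam_bound a b > 0"
    by (simp add: lam_bound_pos)
next
  fix c s
  assume "is_trig_poly c \<and> nonconstant c \<and> (\<forall>x. Re (trig_eval c x) > 0)"
  then interpret pos_trig_poly c
    by unfold_locales (auto simp: is_trig_poly_def)
  show "sup_norm (Psi s c) \<le> lam_bound (rho c) (tau c) * real_of_int (n_deg c) powr (pi / 2)"
    using sup_norm_Psi_bound by (simp add: n_def)
qed

end
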